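(* Let $\mathcal{LS}_{\mathfrak{B}_1}$ be the operad (variety) of left-symmetric algebras over a field of characteristic $0$ satisfying the identity $(ab)c-(ba)c-(ac)b+(ca)b+(bc)a-(cb)a=0$. Its Koszul dual operad $\mathcal{LS}_{\mathfrak{B}_1}^{(!)}$ is the operad of assosymmetric algebras satisfying the left-commutative identity $a(bc)=b(ac)$.
   Context: A left-symmetric algebra is an algebra whose associator $(a,b,c)=(ab)c-a(bc)$ satisfies $(a,b,c)=(b,a,c)$. An algebra is assosymmetric if its associator is invariant under all permutations of $a,b,c$. The Koszul dual of a binary quadratic operad is taken in the sense of Ginzburg–Kapranov; equivalently, $\mathcal{P}^{(!)}$ is the quadratic operad whose algebras $U$ are defined by exactly those degree-3 identities making $S\otimes U$, with product $(a\otimes u)(b\otimes v)=ab\otimes uv$, Lie-admissible for every $\mathcal{P}$-algebra $S$. *)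

theory Defs
  imports Complex_Main "HOL-Library.Function_Algebras"
begin

definition is_algebra :: "('k::field \<Rightarrow> 'a::ab_group_add \<Rightarrow> 'a) \<Rightarrow> ('a \<Rightarrow> 'a \<Rightarrow> 'a) \<Rightarrow> bool" where
  "is_algebra sc m \<longleftrightarrow> vector_space sc \<and>
     (\<forall>x y z. m (x + y) z = m x z + m y z) \<and>
     (\<forall>x y z. m x (y + z) = m x y + m x z) \<and>
     (\<forall>c x y. m (sc c x) y = sc c (m x y)) \<and>
     (\<forall>c x y. m x (sc c y) = sc c (m x y))"

definition associator :: "('a::ab_group_add \<Rightarrow> 'a \<Rightarrow> 'a) \<Rightarrow> 'a \<Rightarrow> 'a \<Rightarrow> 'a \<Rightarrow> 'a" where
  "associator m a b c = m (m a b) c - m a (m b c)"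

definition left_symmetric :: "('a::ab_group_add \<Rightarrow> 'a \<Rightarrow> 'a) \<Rightarrow> bool" where
  "left_symmetric m \<longleftrightarrow> (\<forall>a b c. associator m a b c = associator m b a c)"

definition identity_B1 :: "('a::ab_group_add \<Rightarrow> 'a \<Rightarrow> 'a) \<Rightarrow> bool" where
  "identity_B1 m \<longleftrightarrow> (\<forall>a b c.
     m (m a b) c - m (m b a) c - m (m a c) b + m (m c a) b + m (m b c) a - m (m c b) a = 0)"

definition LS_B1_algebra :: "('k::field \<Rightarrow> 'a::ab_group_add \<Rightarrow> 'a) \<Rightarrow> ('a \<Rightarrow> 'a \<Rightarrow> 'a) \<Rightarrow> bool" where
  "LS_B1_algebra sc m \<longleftrightarrow> is_algebra sc m \<and> left_symmetric m \<and> identity_B1 m"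

definition assosymmetric :: "('a::ab_group_add \<Rightarrow> 'a \<Rightarrow> 'a) \<Rightarrow> bool" where
  "assosymmetric m \<longleftrightarrow> (\<forall>a b c.
     associator m a b c = associator m a c b \<and>
     associator m a b c = associator m b a c \<and>
     associator m a b c = associator m b c a \<and>
     associator m a b c = associator m c a b \<and>
     associator m a b c = associator m c b a)"

definition left_commutative :: "('a \<Rightarrow> 'a \<Rightarrow> 'a) \<Rightarrow> bool" where
  "left_commutative m \<longleftrightarrow> (\<forall>a b c. m a (m b c) = m b (m a c))"

text \<open>An element of S \<otimes> U is represented by a finite list [(s1,u1),...,(sn,un)],
  standing for the sum of the pure tensors si \<otimes> ui.  Such a sum is zero in
  S \<otimes> U iff its image under the canonical (injective) map
  S \<otimes> U \<rightarrow> Hom(S*, U), s \<otimes> u \<mapsto> (\<phi> \<mapsto> \<phi>(s) u), vanishes, i.e. iff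
  for every K-linear functional \<phi> on S the sum of the \<phi>(si) ui is zero.\<close>

definition tensor_is_zero ::
  "('k::field \<Rightarrow> 's::ab_group_add \<Rightarrow> 's) \<Rightarrow> ('k \<Rightarrow> 'u::ab_group_add \<Rightarrow> 'u) \<Rightarrow> ('s \<times> 'u) list \<Rightarrow> bool" where
  "tensor_is_zero scS scU X \<longleftrightarrow>
     (\<forall>\<phi>. Vector_Spaces.linear scS ((*)) \<phi> \<longrightarrow> sum_list (map (\<lambda>(s, u). scU (\<phi> s) u) X) = 0)"

definition tensor_mul ::
  "('s \<Rightarrow> 's \<Rightarrow> 's) \<Rightarrow> ('u \<Rightarrow> 'u \<Rightarrow> 'u) \<Rightarrow> ('s \<times> 'u) list \<Rightarrow> ('s \<times> 'u) list \<Rightarrow> ('s \<times> 'u) list" where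
  "tensor_mul mS mU X Y = concat (map (\<lambda>(s, u). map (\<lambda>(t, v). (mS s t, mU u v)) Y) X)"

definition tensor_neg :: "('s \<times> 'u::ab_group_add) list \<Rightarrow> ('s \<times> 'u) list" where
  "tensor_neg X = map (\<lambda>(s, u). (s, - u)) X"

definition tensor_commutator ::
  "('s \<Rightarrow> 's \<Rightarrow> 's) \<Rightarrow> ('u::ab_group_add \<Rightarrow> 'u \<Rightarrow> 'u) \<Rightarrow> ('s \<times> 'u) list \<Rightarrow> ('s \<times> 'u) list \<Rightarrow> ('s \<times> 'u) list" where
  "tensor_commutator mS mU X Y = tensor_mul mS mU X Y @ tensor_neg (tensor_mul mS mU Y X)"

text \<open>S \<otimes> U is Lie-admissible: the commutator satisfies the Jacobi identity
  (anticommutativity of the commutator holds automatically).\<close>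
definition tensor_Lie_admissible ::
  "('k::field \<Rightarrow> 's::ab_group_add \<Rightarrow> 's) \<Rightarrow> ('s \<Rightarrow> 's \<Rightarrow> 's) \<Rightarrow>
   ('k \<Rightarrow> 'u::ab_group_add \<Rightarrow> 'u) \<Rightarrow> ('u \<Rightarrow> 'u \<Rightarrow> 'u) \<Rightarrow> bool" where
  "tensor_Lie_admissible scS mS scU mU \<longleftrightarrow>
     (\<forall>X Y Z. tensor_is_zero scS scU
        (tensor_commutator mS mU (tensor_commutator mS mU X Y) Z @
         tensor_commutator mS mU (tensor_commutator mS mU Y Z) X @
         tensor_commutator mS mU (tensor_commutator mS mU Z X) Y))"

end

theory Submission
  imports Defs
begin

(* A linear functional \<phi> on S turns s \<otimes> u into \<phi>(s) u, and the Jacobiator of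
  the commutator of S \<otimes> U is trilinear, so Lie-admissibility reduces to pure tensors
  a \<otimes> u, b \<otimes> v, c \<otimes> w. In U write (xy)z = x(yz) + (x,y,z). If U is assosymmetric all six
  associators of u, v, w coincide, and if U is left-commutative x(yz) only depends on z. The
  Jacobiator then regroups as the B1 expression of a, b, c paired with (u,v,w), plus the
  left-symmetry defects (a,b,c) - (b,a,c) (and cyclic) paired with right-normed words; all of
  these vanish in an LS_B1 algebra.
  Conversely, the two-dimensional LS_B1 algebras x y = x_0 y, x y = y_0 x and x y = x_0 y_1 e_1,
  tested with \<phi>(x) = x_1 on basis tensors, force (u,v,w) = (v,u,w), (u,v,w) = (u,w,v) and
  u(vw) = v(uw); two transpositions generate all permutations of the associator.
  Characteristic 0 is never used. *)

lemma sum_list_map_concat: "(\<Sum>x\<leftarrow>concat xss. f x) = (\<Sum>xs\<leftarrow>xss. \<Sum>x\<leftarrow>xs. f x)"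
  by (induction xss) auto

lemma sum_list_commute:
  fixes f :: "'a \<Rightarrow> 'b \<Rightarrow> 'c::comm_monoid_add"
  shows "(\<Sum>x\<leftarrow>xs. \<Sum>y\<leftarrow>ys. f x y) = (\<Sum>y\<leftarrow>ys. \<Sum>x\<leftarrow>xs. f x y)"
  by (induction xs) (simp_all add: sum_list_addf)

definition biadditive :: "('a::ab_group_add \<Rightarrow> 'b::ab_group_add \<Rightarrow> 'c::ab_group_add) \<Rightarrow> bool" where
  "biadditive f \<longleftrightarrow> (\<forall>x. additive (f x)) \<and> (\<forall>y. additive (\<lambda>x. f x y))"

lemma biadditive_add:
  assumes "biadditive f"
  shows "f (x + x') y = f x y + f x' y" and "f x (y + y') = f x y + f x y'"
  using assms additive.add unfolding biadditive_def by fastforce+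

lemma biadditive_diff:
  assumes "biadditive f"
  shows "f (x - x') y = f x y - f x' y" and "f x (y - y') = f x y - f x y'"
  using assms additive.diff unfolding biadditive_def by fastforce+

lemma biadditive_minus:
  assumes "biadditive f"
  shows "f (- x) y = - f x y" and "f x (- y) = - f x y"
  using assms additive.minus unfolding biadditive_def by fastforce+

lemma biadditive_zero:
  assumes "biadditive f"
  shows "f 0 y = 0" and "f x 0 = 0"
  using assms additive.zero unfolding biadditive_def by fastforce+

lemma is_algebra_vector_space: "is_algebra sc m \<Longrightarrow> vector_space sc"
  by (simp add: is_algebra_def)

lemma is_algebra_biadditive: "is_algebra sc m \<Longrightarrow> biadditive m"
  by (simp add: is_algebra_def biadditive_def additive_def)

lemma biadditive_scale_linear:
  assumes "vector_space scU" and "Vector_Spaces.linear scS (*) \<phi>"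
  shows "biadditive (\<lambda>s. scU (\<phi> s))"
proof -
  interpret U: vector_space scU by fact
  interpret \<phi>: Vector_Spaces.linear scS "(*)" \<phi> by fact
  show ?thesis
    by (simp add: biadditive_def additive_def \<phi>.add U.scale_left_distrib U.scale_right_distrib)
qed

lemma left_normed_product_eq: "m (m x y) z = m x (m y z) + associator m x y z"
  by (simp add: associator_def)

definition right_symmetric :: "('a::ab_group_add \<Rightarrow> 'a \<Rightarrow> 'a) \<Rightarrow> bool" where
  "right_symmetric m \<longleftrightarrow> (\<forall>a b c. associator m a b c = associator m a c b)"

lemma assosymmetric_iff: "assosymmetric m \<longleftrightarrow> left_symmetric m \<and> right_symmetric m"
  unfolding assosymmetric_def left_symmetric_def right_symmetric_def by metis

definition tensor_pairing :: "('s \<Rightarrow> 'u \<Rightarrow> 'w::comm_monoid_add) \<Rightarrow> ('s \<times> 'u) list \<Rightarrow> 'w" where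
  "tensor_pairing \<beta> X = (\<Sum>(s, u)\<leftarrow>X. \<beta> s u)"

definition tensor_jacobiator ::
  "('s \<Rightarrow> 's \<Rightarrow> 's) \<Rightarrow> ('u::ab_group_add \<Rightarrow> 'u \<Rightarrow> 'u) \<Rightarrow>
   ('s \<times> 'u) list \<Rightarrow> ('s \<times> 'u) list \<Rightarrow> ('s \<times> 'u) list \<Rightarrow> ('s \<times> 'u) list" where
  "tensor_jacobiator mS mU X Y Z =
     tensor_commutator mS mU (tensor_commutator mS mU X Y) Z @
     tensor_commutator mS mU (tensor_commutator mS mU Y Z) X @
     tensor_commutator mS mU (tensor_commutator mS mU Z X) Y"

lemma tensor_Lie_admissible_iff:
  "tensor_Lie_admissible scS mS scU mU \<longleftrightarrow>
     (\<forall>X Y Z \<phi>. Vector_Spaces.linear scS (*) \<phi> \<longrightarrow>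
        tensor_pairing (\<lambda>s. scU (\<phi> s)) (tensor_jacobiator mS mU X Y Z) = 0)"
  by (auto simp: tensor_Lie_admissible_def tensor_is_zero_def tensor_pairing_def tensor_jacobiator_def)

lemma tensor_pairing_append: "tensor_pairing \<beta> (X @ Y) = tensor_pairing \<beta> X + tensor_pairing \<beta> Y"
  by (simp add: tensor_pairing_def)

lemma tensor_pairing_neg:
  assumes "biadditive \<beta>"
  shows "tensor_pairing \<beta> (tensor_neg X) = - tensor_pairing \<beta> X"
  by (induction X) (auto simp: tensor_pairing_def tensor_neg_def biadditive_minus[OF assms])

lemma sum_list_tensor_mul:
  "(\<Sum>p\<leftarrow>tensor_mul mS mU X Y. f p) =
     (\<Sum>x\<leftarrow>X. \<Sum>y\<leftarrow>Y. f (mS (fst x) (fst y), mU (snd x) (snd y)))"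
  by (simp add: tensor_mul_def sum_list_map_concat o_def split_def)

lemma tensor_mul_append_left:
  "tensor_mul mS mU (X @ Y) Z = tensor_mul mS mU X Z @ tensor_mul mS mU Y Z"
  by (simp add: tensor_mul_def)

lemma tensor_pairing_tensor_mul_append_right:
  "tensor_pairing \<beta> (tensor_mul mS mU Z (X @ Y)) =
     tensor_pairing \<beta> (tensor_mul mS mU Z X) + tensor_pairing \<beta> (tensor_mul mS mU Z Y)"
  by (simp add: tensor_pairing_def sum_list_tensor_mul sum_list_addf)

lemma tensor_mul_neg:
  assumes "biadditive mU"
  shows "tensor_mul mS mU (tensor_neg X) Y = tensor_neg (tensor_mul mS mU X Y)"
    and "tensor_mul mS mU Y (tensor_neg X) = tensor_neg (tensor_mul mS mU Y X)"
  by (simp_all add: tensor_mul_def tensor_neg_def map_concat o_def split_def biadditive_minus[OF assms])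

lemma tensor_pairing_commutator_commutator:
  assumes "biadditive \<beta>" "biadditive mU"
  shows "tensor_pairing \<beta> (tensor_commutator mS mU (tensor_commutator mS mU X Y) Z) =
      tensor_pairing \<beta> (tensor_mul mS mU (tensor_mul mS mU X Y) Z)
    - tensor_pairing \<beta> (tensor_mul mS mU (tensor_mul mS mU Y X) Z)
    - tensor_pairing \<beta> (tensor_mul mS mU Z (tensor_mul mS mU X Y))
    + tensor_pairing \<beta> (tensor_mul mS mU Z (tensor_mul mS mU Y X))"
  by (simp add: tensor_commutator_def tensor_mul_append_left tensor_pairing_append
      tensor_mul_neg[OF assms(2)] tensor_pairing_neg[OF assms(1)] tensor_pairing_tensor_mul_append_right)

lemma tensor_pairing_jacobiator:
  assumes "biadditive \<beta>" "biadditive mU"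
  shows "tensor_pairing \<beta> (tensor_jacobiator mS mU X Y Z) =
     (\<Sum>x\<leftarrow>X. \<Sum>y\<leftarrow>Y. \<Sum>z\<leftarrow>Z. tensor_pairing \<beta> (tensor_jacobiator mS mU [x] [y] [z]))"
  apply (simp only: tensor_jacobiator_def tensor_pairing_append
      tensor_pairing_commutator_commutator[OF assms])
  apply (simp only: tensor_pairing_def sum_list_tensor_mul)
  apply (simp only: sum_list_commute[of _ Y X] sum_list_commute[of _ Z X] sum_list_commute[of _ Z Y]
      sum_list_addf sum_list_subtractf)
  apply (simp add: algebra_simps)
  done

lemma tensor_pairing_jacobiator_pure:
  assumes "biadditive \<beta>" "biadditive mU"
  shows "tensor_pairing \<beta> (tensor_jacobiator mS mU [(a, u)] [(b, v)] [(c, w)]) =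
      \<beta> (mS (mS a b) c) (mU (mU u v) w) - \<beta> (mS (mS b a) c) (mU (mU v u) w)
    - \<beta> (mS c (mS a b)) (mU w (mU u v)) + \<beta> (mS c (mS b a)) (mU w (mU v u))
    + \<beta> (mS (mS b c) a) (mU (mU v w) u) - \<beta> (mS (mS c b) a) (mU (mU w v) u)
    - \<beta> (mS a (mS b c)) (mU u (mU v w)) + \<beta> (mS a (mS c b)) (mU u (mU w v))
    + \<beta> (mS (mS c a) b) (mU (mU w u) v) - \<beta> (mS (mS a c) b) (mU (mU u w) v)
    - \<beta> (mS b (mS c a)) (mU v (mU w u)) + \<beta> (mS b (mS a c)) (mU v (mU u w))"
  unfolding tensor_jacobiator_def tensor_pairing_append tensor_pairing_commutator_commutator[OF assms]
  by (simp add: tensor_pairing_def tensor_mul_def)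

lemma tensor_pairing_jacobiator_pure_eq_0:
  assumes \<beta>: "biadditive \<beta>" and mU: "biadditive mU"
    and "assosymmetric mU" "left_commutative mU" "left_symmetric mS" "identity_B1 mS"
  shows "tensor_pairing \<beta> (tensor_jacobiator mS mU [(a, u)] [(b, v)] [(c, w)]) = 0"
proof -
  define A where "A = associator mU u v w"
  have associators:
    "associator mU u v w = A" "associator mU v u w = A" "associator mU v w u = A"
    "associator mU w v u = A" "associator mU w u v = A" "associator mU u w v = A"
    using \<open>assosymmetric mU\<close> unfolding assosymmetric_def A_def by metis+
  have right_normed:
    "mU v (mU u w) = mU u (mU v w)" "mU u (mU w v) = mU w (mU u v)" "mU w (mU v u) = mU v (mU w u)"
    using \<open>left_commutative mU\<close> unfolding left_commutative_def by metis+
  have "tensor_pairing \<beta> (tensor_jacobiator mS mU [(a, u)] [(b, v)] [(c, w)]) =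
      \<beta> (mS (mS a b) c - mS (mS b a) c - mS (mS a c) b + mS (mS c a) b + mS (mS b c) a - mS (mS c b) a) A
    + \<beta> (associator mS a b c - associator mS b a c) (mU u (mU v w))
    + \<beta> (associator mS c a b - associator mS a c b) (mU w (mU u v))
    + \<beta> (associator mS b c a - associator mS c b a) (mU v (mU w u))"
    unfolding tensor_pairing_jacobiator_pure[OF \<beta> mU] left_normed_product_eq[of mU] associators
      right_normed
    by (simp add: biadditive_add[OF \<beta>] biadditive_diff[OF \<beta>] associator_def)
  also have "\<dots> = 0"
    using \<open>left_symmetric mS\<close> \<open>identity_B1 mS\<close>
    by (simp add: left_symmetric_def identity_B1_def biadditive_zero[OF \<beta>])
  finally show ?thesis .
qed

theorem tensor_Lie_admissible_if_assosymmetric_left_commutative: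
  fixes scU :: "'k::field \<Rightarrow> 'u::ab_group_add \<Rightarrow> 'u" and scS :: "'k \<Rightarrow> 's::ab_group_add \<Rightarrow> 's"
  assumes U: "is_algebra scU mU" and "assosymmetric mU" "left_commutative mU"
    and S: "LS_B1_algebra scS mS"
  shows "tensor_Lie_admissible scS mS scU mU"
  unfolding tensor_Lie_admissible_iff
proof (intro allI impI)
  fix X Y Z and \<phi> :: "'s \<Rightarrow> 'k"
  assume "Vector_Spaces.linear scS (*) \<phi>"
  with is_algebra_vector_space[OF U] have \<beta>: "biadditive (\<lambda>s. scU (\<phi> s))"
    by (rule biadditive_scale_linear)
  have mU: "biadditive mU"
    using U by (rule is_algebra_biadditive)
  have "left_symmetric mS" "identity_B1 mS"
    using S by (simp_all add: LS_B1_algebra_def)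
  then have pure: "tensor_pairing (\<lambda>s. scU (\<phi> s)) (tensor_jacobiator mS mU [x] [y] [z]) = 0" for x y z
    using tensor_pairing_jacobiator_pure_eq_0[OF \<beta> mU assms(2,3),
        of mS "fst x" "snd x" "fst y" "snd y" "fst z" "snd z"]
    by simp
  show "tensor_pairing (\<lambda>s. scU (\<phi> s)) (tensor_jacobiator mS mU X Y Z) = 0"
    by (subst tensor_pairing_jacobiator[OF \<beta> mU]) (simp add: pure)
qed

definition pointwise_scale :: "'k::field \<Rightarrow> (nat \<Rightarrow> 'k) \<Rightarrow> nat \<Rightarrow> 'k" where
  "pointwise_scale c x = (\<lambda>i. c * x i)"

definition basis_seq :: "nat \<Rightarrow> nat \<Rightarrow> 'k::field" where
  "basis_seq j = (\<lambda>i. if i = j then 1 else 0)"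

lemma vector_space_pointwise_scale: "vector_space pointwise_scale"
  by (simp add: vector_space_def pointwise_scale_def fun_eq_iff algebra_simps)

lemma linear_pointwise_scale_eval: "Vector_Spaces.linear pointwise_scale (*) (\<lambda>x. x j)"
  using vector_space_pointwise_scale
  by (simp add: Vector_Spaces.linear_iff vector_space_def pointwise_scale_def algebra_simps)

definition lhead_mult :: "(nat \<Rightarrow> 'k::field) \<Rightarrow> (nat \<Rightarrow> 'k) \<Rightarrow> nat \<Rightarrow> 'k" where
  "lhead_mult x y = (\<lambda>i. x 0 * y i)"

definition rhead_mult :: "(nat \<Rightarrow> 'k::field) \<Rightarrow> (nat \<Rightarrow> 'k) \<Rightarrow> nat \<Rightarrow> 'k" where
  "rhead_mult x y = (\<lambda>i. x i * y 0)"

definition rank_one_mult :: "(nat \<Rightarrow> 'k::field) \<Rightarrow> (nat \<Rightarrow> 'k) \<Rightarrow> nat \<Rightarrow> 'k" where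
  "rank_one_mult x y = (\<lambda>i. if i = 1 then x 0 * y 1 else 0)"

lemma LS_B1_algebra_lhead_mult: "LS_B1_algebra pointwise_scale lhead_mult"
  using vector_space_pointwise_scale
  by (simp add: LS_B1_algebra_def is_algebra_def left_symmetric_def identity_B1_def associator_def
      lhead_mult_def pointwise_scale_def fun_eq_iff algebra_simps)

lemma LS_B1_algebra_rhead_mult: "LS_B1_algebra pointwise_scale rhead_mult"
  using vector_space_pointwise_scale
  by (simp add: LS_B1_algebra_def is_algebra_def left_symmetric_def identity_B1_def associator_def
      rhead_mult_def pointwise_scale_def fun_eq_iff algebra_simps)

lemma LS_B1_algebra_rank_one_mult: "LS_B1_algebra pointwise_scale rank_one_mult"
  using vector_space_pointwise_scale
  by (simp add: LS_B1_algebra_def is_algebra_def left_symmetric_def identity_B1_def associator_def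
      rank_one_mult_def pointwise_scale_def fun_eq_iff algebra_simps)

lemma tensor_Lie_admissible_pure_jacobi_coord:
  fixes scU :: "'k::field \<Rightarrow> 'u::ab_group_add \<Rightarrow> 'u"
  assumes U: "is_algebra scU mU" and "tensor_Lie_admissible pointwise_scale mS scU mU"
  shows "scU (mS (mS a b) c j) (mU (mU u v) w) - scU (mS (mS b a) c j) (mU (mU v u) w)
    - scU (mS c (mS a b) j) (mU w (mU u v)) + scU (mS c (mS b a) j) (mU w (mU v u))
    + scU (mS (mS b c) a j) (mU (mU v w) u) - scU (mS (mS c b) a j) (mU (mU w v) u)
    - scU (mS a (mS b c) j) (mU u (mU v w)) + scU (mS a (mS c b) j) (mU u (mU w v))
    + scU (mS (mS c a) b j) (mU (mU w u) v) - scU (mS (mS a c) b j) (mU (mU u w) v)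
    - scU (mS b (mS c a) j) (mU v (mU w u)) + scU (mS b (mS a c) j) (mU v (mU u w)) = 0"
proof -
  have \<beta>: "biadditive (\<lambda>s :: nat \<Rightarrow> 'k. scU (s j))"
    using is_algebra_vector_space[OF U] linear_pointwise_scale_eval by (rule biadditive_scale_linear)
  have "tensor_pairing (\<lambda>s. scU (s j)) (tensor_jacobiator mS mU [(a, u)] [(b, v)] [(c, w)]) = 0"
    using assms(2) linear_pointwise_scale_eval unfolding tensor_Lie_admissible_iff by blast
  then show ?thesis
    by (simp only: tensor_pairing_jacobiator_pure[OF \<beta> is_algebra_biadditive[OF U]])
qed

lemma left_symmetric_if_tensor_Lie_admissible_lhead_mult:
  fixes scU :: "'k::field \<Rightarrow> 'u::ab_group_add \<Rightarrow> 'u"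
  assumes U: "is_algebra scU mU"
    and "tensor_Lie_admissible pointwise_scale (lhead_mult :: _ \<Rightarrow> _ \<Rightarrow> nat \<Rightarrow> 'k) scU mU"
  shows "left_symmetric mU"
  unfolding left_symmetric_def
proof (intro allI)
  fix u v w
  interpret U: vector_space scU
    by (rule is_algebra_vector_space[OF U])
  have "mU (mU u v) w - mU (mU v u) w - mU u (mU v w) + mU v (mU u w) = 0"
    using tensor_Lie_admissible_pure_jacobi_coord[OF assms,
        of "basis_seq 0" "basis_seq 0" "basis_seq 1" 1 u v w]
    by (simp add: lhead_mult_def basis_seq_def)
  then show "associator mU u v w = associator mU v u w"
    by (simp add: associator_def algebra_simps)
qed

lemma right_symmetric_if_tensor_Lie_admissible_rhead_mult:
  fixes scU :: "'k::field \<Rightarrow> 'u::ab_group_add \<Rightarrow> 'u"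
  assumes U: "is_algebra scU mU"
    and "tensor_Lie_admissible pointwise_scale (rhead_mult :: _ \<Rightarrow> _ \<Rightarrow> nat \<Rightarrow> 'k) scU mU"
  shows "right_symmetric mU"
  unfolding right_symmetric_def
proof (intro allI)
  fix u v w
  interpret U: vector_space scU
    by (rule is_algebra_vector_space[OF U])
  have "mU (mU u v) w - mU u (mU v w) + mU u (mU w v) = mU (mU u w) v"
    using tensor_Lie_admissible_pure_jacobi_coord[OF assms,
        of "basis_seq 1" "basis_seq 0" "basis_seq 0" 1 u v w]
    by (simp add: rhead_mult_def basis_seq_def)
  then show "associator mU u v w = associator mU u w v"
    by (simp add: associator_def algebra_simps)
qed

lemma left_commutative_if_tensor_Lie_admissible_rank_one_mult:
  fixes scU :: "'k::field \<Rightarrow> 'u::ab_group_add \<Rightarrow> 'u"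
  assumes U: "is_algebra scU mU"
    and "tensor_Lie_admissible pointwise_scale (rank_one_mult :: _ \<Rightarrow> _ \<Rightarrow> nat \<Rightarrow> 'k) scU mU"
  shows "left_commutative mU"
  unfolding left_commutative_def
proof (intro allI)
  fix u v w
  interpret U: vector_space scU
    by (rule is_algebra_vector_space[OF U])
  show "mU u (mU v w) = mU v (mU u w)"
    using tensor_Lie_admissible_pure_jacobi_coord[OF assms,
        of "basis_seq 0" "basis_seq 0" "basis_seq 1" 1 u v w]
    by (simp add: rank_one_mult_def basis_seq_def)
qed

theorem mainTheorem4:
  fixes scU :: "'k::field_char_0 \<Rightarrow> 'u::ab_group_add \<Rightarrow> 'u"
    and mU :: "'u \<Rightarrow> 'u \<Rightarrow> 'u"
  assumes "is_algebra scU mU"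
  shows "(assosymmetric mU \<and> left_commutative mU \<longrightarrow>
            (\<forall>(scS :: 'k \<Rightarrow> 's::ab_group_add \<Rightarrow> 's) mS.
               LS_B1_algebra scS mS \<longrightarrow> tensor_Lie_admissible scS mS scU mU))
       \<and> ((\<forall>(scS :: 'k \<Rightarrow> (nat \<Rightarrow> 'k) \<Rightarrow> (nat \<Rightarrow> 'k)) mS.
               LS_B1_algebra scS mS \<longrightarrow> tensor_Lie_admissible scS mS scU mU) \<longrightarrow>
            assosymmetric mU \<and> left_commutative mU)"
proof (intro conjI impI allI)
  fix scS :: "'k \<Rightarrow> 's \<Rightarrow> 's" and mS
  assume "assosymmetric mU \<and> left_commutative mU" and "LS_B1_algebra scS mS"
  with assms show "tensor_Lie_admissible scS mS scU mU"
    by (blast intro: tensor_Lie_admissible_if_assosymmetric_left_commutative)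
next
  assume admissible: "\<forall>(scS :: 'k \<Rightarrow> (nat \<Rightarrow> 'k) \<Rightarrow> (nat \<Rightarrow> 'k)) mS.
    LS_B1_algebra scS mS \<longrightarrow> tensor_Lie_admissible scS mS scU mU"
  have "left_symmetric mU"
    using admissible LS_B1_algebra_lhead_mult
    by (blast intro: left_symmetric_if_tensor_Lie_admissible_lhead_mult[OF assms])
  moreover have "right_symmetric mU"
    using admissible LS_B1_algebra_rhead_mult
    by (blast intro: right_symmetric_if_tensor_Lie_admissible_rhead_mult[OF assms])
  ultimately show "assosymmetric mU"
    by (simp add: assosymmetric_iff)
next
  assume "\<forall>(scS :: 'k \<Rightarrow> (nat \<Rightarrow> 'k) \<Rightarrow> (nat \<Rightarrow> 'k)) mS.
    LS_B1_algebra scS mS \<longrightarrow> tensor_Lie_admissible scS mS scU mU"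
  with LS_B1_algebra_rank_one_mult show "left_commutative mU"
    by (blast intro: left_commutative_if_tensor_Lie_admissible_rank_one_mult[OF assms])
qed

end
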